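(* For any $\alpha\in(0,1)$ and any $p,q>0$ there exist positive definite $2\times2$ matrices $A,B$ such that $SG_{\alpha,p}(A,B)\not\le_{\mathrm{chao}}\mathcal{A}_{\alpha,q}(A,B)$ (hence $SG_{\alpha,p}(A,B)\not\le\mathcal{A}_{\alpha,q}(A,B)$).
   Context: For positive definite $A,B$: $A\#B:=A^{1/2}(A^{-1/2}BA^{-1/2})^{1/2}A^{1/2}$; $F_\alpha(A,B):=(A^{-1}\#B)^\alpha A(A^{-1}\#B)^\alpha$ (weighted spectral geometric mean); $SG_{\alpha,p}(A,B):=F_\alpha(A^p,B^p)^{1/p}$; $\mathcal{A}_{\alpha,q}(A,B):=((1-\alpha)A^q+\alpha B^q)^{1/q}$. For positive definite $X,Y$, $X\le Y$ is the Loewner order and $X\le_{\mathrm{chao}}Y$ (chaotic order) means $\log X\le\log Y$. *)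

theory Defs
  imports "HOL-Analysis.Analysis"
begin

definition pos_def :: "real^'n^'n \<Rightarrow> bool" where
  "pos_def A \<longleftrightarrow> transpose A = A \<and> (\<forall>v. v \<noteq> 0 \<longrightarrow> v \<bullet> (A *v v) > 0)"

definition loewner_le :: "real^'n^'n \<Rightarrow> real^'n^'n \<Rightarrow> bool" where
  "loewner_le X Y \<longleftrightarrow> (\<forall>v. v \<bullet> ((Y - X) *v v) \<ge> 0)"

definition mdiag :: "real^'n \<Rightarrow> real^'n^'n" where
  "mdiag d = (\<chi> i j. if i = j then d $ i else 0)"

definition mfun :: "(real \<Rightarrow> real) \<Rightarrow> real^'n^'n \<Rightarrow> real^'n^'n" where
  "mfun f A = (THE X. \<exists>U d. orthogonal_matrix U \<and> A = U ** mdiag d ** transpose U \<and>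
                         X = U ** mdiag (\<chi> i. f (d $ i)) ** transpose U)"

definition mpow :: "real^'n^'n \<Rightarrow> real \<Rightarrow> real^'n^'n" where
  "mpow A t = mfun (\<lambda>x. x powr t) A"

definition mlog :: "real^'n^'n \<Rightarrow> real^'n^'n" where
  "mlog A = mfun ln A"

definition gmean :: "real^'n^'n \<Rightarrow> real^'n^'n \<Rightarrow> real^'n^'n" where
  "gmean A B = mpow A (1/2) **
     mpow (mpow A (-1/2) ** B ** mpow A (-1/2)) (1/2) ** mpow A (1/2)"

definition Fsg :: "real \<Rightarrow> real^'n^'n \<Rightarrow> real^'n^'n \<Rightarrow> real^'n^'n" where
  "Fsg \<alpha> A B = mpow (gmean (matrix_inv A) B) \<alpha> ** A ** mpow (gmean (matrix_inv A) B) \<alpha>"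

definition SG :: "real \<Rightarrow> real \<Rightarrow> real^'n^'n \<Rightarrow> real^'n^'n \<Rightarrow> real^'n^'n" where
  "SG \<alpha> p A B = mpow (Fsg \<alpha> (mpow A p) (mpow B p)) (1/p)"

definition Amean :: "real \<Rightarrow> real \<Rightarrow> real^'n^'n \<Rightarrow> real^'n^'n \<Rightarrow> real^'n^'n" where
  "Amean \<alpha> q A B = mpow ((1 - \<alpha>) *\<^sub>R mpow A q + \<alpha> *\<^sub>R mpow B q) (1/q)"

definition chao_le :: "real^'n^'n \<Rightarrow> real^'n^'n \<Rightarrow> bool" where
  "chao_le X Y \<longleftrightarrow> loewner_le (mlog X) (mlog Y)"

end

(*
  Let c = k t^(1-alpha), s = sqrt (1 - c^2) and R the rotation with first column (c, s).  Choose W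
  with diag (t^(1-alpha), 1) W = R diag (1, t) and put b = W W^T, a = T b T with T = diag (t, 1).
  Then b = G a G for G = diag (1/t, 1), hence a^-1 # b = G and
  G^alpha a G^alpha = R diag (1, t^2) R^T.
  For A = a^(1/p) and B = b^(1/p) this gives SG_{alpha,p}(A, B) = R diag (1, t^(2/p)) R^T, which has
  (c, s) as eigenvector for the eigenvalue 1 and tends to diag (0, 1) as t -> 0.

  The arithmetic mean is M^(1/q) with M = (1 - alpha) a^(q/p) + alpha b^(q/p), and as t -> 0 the
  matrix M tends to M0 = (1 - alpha) diag (0, 1) + alpha (1 + k^2)^(q/p - 1) (k, 1) (k, 1)^T.
  For large k the small eigenvalue of M0 is close to 1 - alpha < 1 and its large eigenvector is
  close to e1, so that (log M0)_22 < 0 and det M0^(1/q) < (M0^(1/q))_11.  For such a fixed k and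
  small t, the first inequality violates log SG <= log A_{alpha,q} along (c, s) ~ e2, and the
  second violates SG <= A_{alpha,q} along u = (-X_12, X_11), X = M0^(1/q), since
  u^T (X - diag (0, 1)) u = X_11 (det X - X_11).
*)

theory Submission
  imports Defs "HOL-Real_Asymp.Real_Asymp"
begin

section \<open>Functional calculus of orthogonally diagonalised matrices\<close>

lemma mdiag_nth [simp]: "mdiag d $ i $ j = (if i = j then d $ i else 0)"
  by (simp add: mdiag_def)

lemma matrix_mul_mdiag_right: "(X ** mdiag d) $ i $ j = X $ i $ j * d $ j"
  by (simp add: matrix_matrix_mult_def if_distrib cong: if_cong)

lemma matrix_mul_mdiag_left: "(mdiag d ** X) $ i $ j = d $ i * X $ i $ j"
  by (simp add: matrix_matrix_mult_def if_distrib if_distribR cong: if_cong)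

lemma matrix_vector_mul_mdiag: "(mdiag d *v v) $ i = d $ i * v $ i"
  by (simp add: matrix_vector_mult_def if_distrib if_distribR cong: if_cong)

lemma mdiag_mult: "mdiag d ** mdiag e = mdiag (d * e)"
  by (simp add: vec_eq_iff matrix_mul_mdiag_right)

lemma mdiag_1: "mdiag 1 = mat 1"
  by (simp add: vec_eq_iff mat_def)

lemma transpose_mdiag [simp]: "transpose (mdiag d) = mdiag d"
  by (simp add: vec_eq_iff transpose_def)

definition orth_diag :: "real^'n^'n \<Rightarrow> real^'n \<Rightarrow> real^'n^'n" where
  "orth_diag U d = U ** mdiag d ** transpose U"

lemma orth_diag_eq_imp_fun_eq:
  fixes U V :: "real^'n^'n"
  assumes U: "orthogonal_matrix U" and V: "orthogonal_matrix V"
    and eq: "orth_diag U d = orth_diag V e"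
  shows "orth_diag U (\<chi> i. f (d $ i)) = orth_diag V (\<chi> i. f (e $ i))"
proof -
  define W where "W = transpose V ** U"
  have "transpose V ** orth_diag U d ** U = transpose V ** orth_diag V e ** U"
    using eq by simp
  then have "W ** mdiag d = mdiag e ** W"
    using U V unfolding W_def orth_diag_def orthogonal_matrix_def
    by (simp add: matrix_mul_assoc[symmetric]) (simp add: matrix_mul_assoc)
  \<comment> \<open>\<open>W\<close> intertwines the diagonals, so \<open>W $ i $ j \<noteq> 0\<close> forces \<open>d $ j = e $ i\<close>.\<close>
  then have comm: "W $ i $ j * d $ j = e $ i * W $ i $ j" for i j
    by (metis matrix_mul_mdiag_left matrix_mul_mdiag_right)
  have "W $ i $ j * f (d $ j) = f (e $ i) * W $ i $ j" for i j
    using comm[of i j] by (cases "W $ i $ j = 0") auto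
  then have "W ** mdiag (\<chi> i. f (d $ i)) = mdiag (\<chi> i. f (e $ i)) ** W"
    by (simp add: vec_eq_iff matrix_mul_mdiag_right matrix_mul_mdiag_left)
  then have "V ** (W ** mdiag (\<chi> i. f (d $ i))) ** transpose U
      = V ** (mdiag (\<chi> i. f (e $ i)) ** W) ** transpose U"
    by simp
  then show ?thesis
    using U V unfolding W_def orth_diag_def orthogonal_matrix_def
    by (simp add: matrix_mul_assoc) (simp add: matrix_mul_assoc[symmetric])
qed

lemma mfun_orth_diag:
  assumes "orthogonal_matrix U"
  shows "mfun f (orth_diag U d) = orth_diag U (\<chi> i. f (d $ i))"
  unfolding mfun_def
proof (rule the_equality)
  show "\<exists>V e. orthogonal_matrix V \<and> orth_diag U d = V ** mdiag e ** transpose V \<and>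
      orth_diag U (\<chi> i. f (d $ i)) = V ** mdiag (\<chi> i. f (e $ i)) ** transpose V"
    using assms unfolding orth_diag_def by blast
next
  fix X
  assume "\<exists>V e. orthogonal_matrix V \<and> orth_diag U d = V ** mdiag e ** transpose V \<and>
      X = V ** mdiag (\<chi> i. f (e $ i)) ** transpose V"
  then show "X = orth_diag U (\<chi> i. f (d $ i))"
    using orth_diag_eq_imp_fun_eq[OF _ assms] unfolding orth_diag_def by metis
qed

lemma mpow_orth_diag:
  "orthogonal_matrix U \<Longrightarrow> mpow (orth_diag U d) t = orth_diag U (\<chi> i. d $ i powr t)"
  unfolding mpow_def by (rule mfun_orth_diag)

lemma mlog_orth_diag:
  "orthogonal_matrix U \<Longrightarrow> mlog (orth_diag U d) = orth_diag U (\<chi> i. ln (d $ i))"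
  unfolding mlog_def by (rule mfun_orth_diag)

lemma orth_diag_mat_1: "orth_diag (mat 1) d = mdiag d"
  by (simp add: orth_diag_def)

lemma mpow_mdiag: "mpow (mdiag d) t = mdiag (\<chi> i. d $ i powr t)"
  using mpow_orth_diag[OF orthogonal_matrix_id] by (simp add: orth_diag_mat_1)

lemma transpose_orth_diag [simp]: "transpose (orth_diag U d) = orth_diag U d"
  by (simp add: orth_diag_def matrix_transpose_mul matrix_mul_assoc)

lemma orth_diag_mult:
  assumes "orthogonal_matrix U"
  shows "orth_diag U d ** orth_diag U e = orth_diag U (d * e)"
proof -
  have "orth_diag U d ** orth_diag U e = U ** mdiag d ** (transpose U ** U) ** mdiag e ** transpose U"
    by (simp add: orth_diag_def matrix_mul_assoc)
  also have "\<dots> = U ** (mdiag d ** mdiag e) ** transpose U"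
    using assms by (simp add: orthogonal_matrix_def matrix_mul_assoc)
  finally show ?thesis
    by (simp add: orth_diag_def mdiag_mult)
qed

lemma orth_diag_1: "orthogonal_matrix U \<Longrightarrow> orth_diag U 1 = mat 1"
  by (simp add: orth_diag_def mdiag_1 orthogonal_matrix_def)

lemma matrix_add_rdistrib: "(A + B) ** C = A ** C + B ** C"
  by (simp add: matrix_matrix_mult_def vec_eq_iff sum.distrib distrib_right)

lemma orth_diag_add: "orth_diag U (d + e) = orth_diag U d + orth_diag U e"
proof -
  have "mdiag (d + e) = mdiag d + mdiag e"
    by (simp add: vec_eq_iff)
  then show ?thesis
    by (simp add: orth_diag_def matrix_add_ldistrib matrix_add_rdistrib)
qed

lemma orth_diag_scaleR: "orth_diag U (c *\<^sub>R d) = c *\<^sub>R orth_diag U d"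
proof -
  have "mdiag (c *\<^sub>R d) = c *\<^sub>R mdiag d"
    by (simp add: vec_eq_iff)
  then show ?thesis
    by (simp add: orth_diag_def matrix_scalar_ac scalar_matrix_assoc)
qed

lemma orth_diag_diff: "orth_diag U (d - e) = orth_diag U d - orth_diag U e"
  using orth_diag_add[of U "d - e" e] by simp

lemma inner_orth_diag:
  "v \<bullet> (orth_diag U d *v v) = (\<Sum>i\<in>UNIV. d $ i * ((v v* U) $ i)^2)"
proof -
  have "v \<bullet> (orth_diag U d *v v) = (v v* U) \<bullet> (mdiag d *v (v v* U))"
    by (simp add: orth_diag_def dot_lmul_matrix matrix_vector_mul_assoc[symmetric])
  then show ?thesis
    by (simp add: inner_vec_def matrix_vector_mul_mdiag power2_eq_square mult_ac)
qed

lemma vector_matrix_mult_orthogonal_eq_0_iff: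
  assumes "orthogonal_matrix U"
  shows "v v* U = 0 \<longleftrightarrow> v = 0"
proof
  assume "v v* U = 0"
  then have "v v* (U ** transpose U) = 0"
    by (metis vector_matrix_mul_assoc vector_matrix_mult_0)
  then show "v = 0"
    using assms by (simp add: orthogonal_matrix_def)
qed simp

lemma pos_def_orth_diag_iff:
  fixes U :: "real^'n^'n"
  assumes U: "orthogonal_matrix U"
  shows "pos_def (orth_diag U d) \<longleftrightarrow> (\<forall>i. 0 < d $ i)"
proof
  assume pd: "pos_def (orth_diag U d)"
  show "\<forall>i. 0 < d $ i"
  proof
    fix i
    define v where "v = (axis i 1 :: real^'n) v* transpose U"
    have "v v* U = axis i 1"
      using U by (simp only: v_def vector_matrix_mul_assoc orthogonal_matrix_def vector_matrix_mul_rid)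
    then have "v \<noteq> 0"
      by (auto simp: axis_eq_0_iff)
    have "v \<bullet> (orth_diag U d *v v) = (\<Sum>j\<in>UNIV. if j = i then d $ i else 0)"
      unfolding inner_orth_diag \<open>v v* U = axis i 1\<close> by (rule sum.cong) (auto simp: axis_def)
    then show "0 < d $ i"
      using pd \<open>v \<noteq> 0\<close> unfolding pos_def_def by auto
  qed
next
  assume d: "\<forall>i. 0 < d $ i"
  show "pos_def (orth_diag U d)"
    unfolding pos_def_def
  proof (intro conjI allI impI)
    fix v :: "real^'n"
    assume "v \<noteq> 0"
    then obtain j where j: "(v v* U) $ j \<noteq> 0"
      using vector_matrix_mult_orthogonal_eq_0_iff[OF U] by (metis vec_eq_iff zero_index)
    have "0 < d $ j * ((v v* U) $ j)^2"
      using d j by simp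
    also have "\<dots> \<le> (\<Sum>i\<in>UNIV. d $ i * ((v v* U) $ i)^2)"
      by (rule member_le_sum) (use d in \<open>auto intro!: mult_nonneg_nonneg simp: less_imp_le\<close>)
    finally show "0 < v \<bullet> (orth_diag U d *v v)"
      by (simp add: inner_orth_diag)
  qed simp
qed

lemma det_orth_diag:
  assumes "orthogonal_matrix U"
  shows "det (orth_diag U d) = (\<Prod>i\<in>UNIV. d $ i)"
proof -
  have "det U * det U = 1"
    using det_orthogonal_matrix[OF assms] by auto
  then show ?thesis
    by (simp add: orth_diag_def det_mul det_diagonal)
qed

lemma matrix_inv_eqI:
  fixes A B :: "'a::semiring_1^'n^'n"
  assumes AB: "A ** B = mat 1" and BA: "B ** A = mat 1"
  shows "matrix_inv A = B"
proof -
  have "A ** matrix_inv A = mat 1 \<and> matrix_inv A ** A = mat 1"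
    unfolding matrix_inv_def by (rule someI[of _ B]) (use AB BA in simp)
  then have "matrix_inv A = matrix_inv A ** (A ** B)"
    using AB by simp
  also have "\<dots> = B"
    using \<open>A ** matrix_inv A = mat 1 \<and> matrix_inv A ** A = mat 1\<close>
    by (simp add: matrix_mul_assoc)
  finally show ?thesis .
qed

lemma matrix_inv_orth_diag:
  assumes U: "orthogonal_matrix U" and d: "\<forall>i. d $ i \<noteq> 0"
  shows "matrix_inv (orth_diag U d) = orth_diag U (\<chi> i. 1 / d $ i)"
proof (rule matrix_inv_eqI)
  have "d * (\<chi> i. 1 / d $ i) = 1" "(\<chi> i. 1 / d $ i) * d = 1"
    using d by (simp_all add: vec_eq_iff)
  then show "orth_diag U d ** orth_diag U (\<chi> i. 1 / d $ i) = mat 1"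
    and "orth_diag U (\<chi> i. 1 / d $ i) ** orth_diag U d = mat 1"
    by (simp_all add: orth_diag_mult[OF U] orth_diag_1[OF U])
qed

lemma invertible_mdiag:
  assumes "\<forall>i. d $ i \<noteq> 0"
  shows "invertible (mdiag d)"
proof -
  have "d * (\<chi> i. 1 / d $ i) = 1" "(\<chi> i. 1 / d $ i) * d = 1"
    using assms by (simp_all add: vec_eq_iff)
  then show ?thesis
    unfolding invertible_def by (metis mdiag_1 mdiag_mult)
qed

lemma pos_def_congruence:
  fixes G H :: "real^'n^'n"
  assumes G: "pos_def G" and H: "invertible H"
  shows "pos_def (transpose H ** G ** H)"
  unfolding pos_def_def
proof (intro conjI allI impI)
  show "transpose (transpose H ** G ** H) = transpose H ** G ** H"
    using G by (simp add: pos_def_def matrix_transpose_mul matrix_mul_assoc)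
  fix v :: "real^'n"
  assume "v \<noteq> 0"
  then have "H *v v \<noteq> 0"
    using inj_matrix_vector_mult[OF H] by (metis injD matrix_vector_mult_0_right)
  then have "0 < (H *v v) \<bullet> (G *v (H *v v))"
    using G by (simp add: pos_def_def)
  also have "\<dots> = v \<bullet> (transpose H *v (G *v (H *v v)))"
    by (metis dot_lmul_matrix vector_transpose_matrix)
  also have "\<dots> = v \<bullet> ((transpose H ** G ** H) *v v)"
    by (simp only: matrix_vector_mul_assoc matrix_mul_assoc)
  finally show "0 < v \<bullet> ((transpose H ** G ** H) *v v)" .
qed

lemma pos_def_scaleR_add:
  fixes X Y :: "real^'n^'n"
  assumes X: "pos_def X" and Y: "pos_def Y" and "0 < a" "0 < b"
  shows "pos_def (a *\<^sub>R X + b *\<^sub>R Y)"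
  unfolding pos_def_def
proof (intro conjI allI impI)
  show "transpose (a *\<^sub>R X + b *\<^sub>R Y) = a *\<^sub>R X + b *\<^sub>R Y"
    using X Y by (simp add: pos_def_def transpose_def vec_eq_iff)
  fix v :: "real^'n"
  assume "v \<noteq> 0"
  then have "0 < a * (v \<bullet> (X *v v)) + b * (v \<bullet> (Y *v v))"
    using X Y \<open>0 < a\<close> \<open>0 < b\<close> unfolding pos_def_def by (simp add: add_pos_pos)
  then show "0 < v \<bullet> ((a *\<^sub>R X + b *\<^sub>R Y) *v v)"
    by (simp add: matrix_vector_mult_add_rdistrib scaleR_matrix_vector_assoc[symmetric]
        inner_add_right)
qed

lemma loewner_le_iff: "loewner_le X Y \<longleftrightarrow> (\<forall>v. v \<bullet> (X *v v) \<le> v \<bullet> (Y *v v))"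
  by (simp add: loewner_le_def matrix_vector_mult_diff_rdistrib inner_diff_right)

lemma tendsto_matrix_mult [tendsto_intros]:
  fixes X :: "'a \<Rightarrow> real^'n^'m" and Y :: "'a \<Rightarrow> real^'k^'n"
  shows "(X \<longlongrightarrow> X0) F \<Longrightarrow> (Y \<longlongrightarrow> Y0) F \<Longrightarrow> ((\<lambda>x. X x ** Y x) \<longlongrightarrow> X0 ** Y0) F"
  unfolding matrix_matrix_mult_def by (intro tendsto_intros)

lemma tendsto_matrix_vector_mult [tendsto_intros]:
  fixes X :: "'a \<Rightarrow> real^'n^'m"
  shows "(X \<longlongrightarrow> X0) F \<Longrightarrow> (v \<longlongrightarrow> v0) F \<Longrightarrow> ((\<lambda>x. X x *v v x) \<longlongrightarrow> X0 *v v0) F"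
  unfolding matrix_vector_mult_def by (intro tendsto_intros)

lemma tendsto_transpose [tendsto_intros]:
  fixes X :: "'a \<Rightarrow> real^'n^'m"
  shows "(X \<longlongrightarrow> X0) F \<Longrightarrow> ((\<lambda>x. transpose (X x)) \<longlongrightarrow> transpose X0) F"
  unfolding transpose_def by (intro tendsto_intros)

section \<open>Symmetric 2x2 matrices\<close>

definition mat2 :: "real \<Rightarrow> real \<Rightarrow> real \<Rightarrow> real \<Rightarrow> real^2^2" where
  "mat2 a b c d = vector [vector [a, b], vector [c, d]]"

lemma mat2_nth [simp]:
  "mat2 a b c d $ 1 $ 1 = a" "mat2 a b c d $ 1 $ 2 = b"
  "mat2 a b c d $ 2 $ 1 = c" "mat2 a b c d $ 2 $ 2 = d"
  by (simp_all add: mat2_def)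

lemma one_neq_two_2 [simp]: "(1::2) \<noteq> 2" "(2::2) \<noteq> 1"
  by (simp_all add: exhaust_2)

lemma vec2_eq_iff: "(x::real^2) = y \<longleftrightarrow> x $ 1 = y $ 1 \<and> x $ 2 = y $ 2"
  by (simp add: vec_eq_iff forall_2)

lemma mat2_eq_iff:
  "(X::real^2^2) = Y \<longleftrightarrow>
     X $ 1 $ 1 = Y $ 1 $ 1 \<and> X $ 1 $ 2 = Y $ 1 $ 2 \<and> X $ 2 $ 1 = Y $ 2 $ 1 \<and> X $ 2 $ 2 = Y $ 2 $ 2"
  by (simp add: vec_eq_iff forall_2)

lemma matrix_mult_2_nth [simp]:
  "((X::real^2^2) ** Y) $ i $ j = X $ i $ 1 * Y $ 1 $ j + X $ i $ 2 * Y $ 2 $ j"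
  by (simp add: matrix_matrix_mult_def sum_2)

lemma matrix_vector_mult_2_nth [simp]:
  "((X::real^2^2) *v v) $ i = X $ i $ 1 * v $ 1 + X $ i $ 2 * v $ 2"
  by (simp add: matrix_vector_mult_def sum_2)

lemma transpose_nth [simp]: "transpose X $ i $ j = X $ j $ i"
  by (simp add: transpose_def)

lemma mat_nth [simp]: "mat a $ i $ j = (if i = j then a else 0)"
  by (simp add: mat_def)

lemma inner_2: "(u::real^2) \<bullet> v = u $ 1 * v $ 1 + u $ 2 * v $ 2"
  by (simp add: inner_vec_def sum_2)

lemma prod_UNIV_2: "prod f (UNIV::2 set) = f 1 * f 2"
  unfolding UNIV_2 by simp

lemma symmetric_2_nth: "transpose (S::real^2^2) = S \<Longrightarrow> S $ 2 $ 1 = S $ 1 $ 2"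
  by (metis transpose_nth)

lemma tendsto_mat2:
  assumes "(a \<longlongrightarrow> a0) F" "(b \<longlongrightarrow> b0) F" "(c \<longlongrightarrow> c0) F" "(d \<longlongrightarrow> d0) F"
  shows "((\<lambda>x. mat2 (a x) (b x) (c x) (d x)) \<longlongrightarrow> mat2 a0 b0 c0 d0) F"
proof (intro vec_tendstoI)
  fix i j :: 2
  show "((\<lambda>x. mat2 (a x) (b x) (c x) (d x) $ i $ j) \<longlongrightarrow> mat2 a0 b0 c0 d0 $ i $ j) F"
    using assms exhaust_2[of i] exhaust_2[of j] by auto
qed

lemma tendsto_vector_2:
  assumes "(x \<longlongrightarrow> x0) F" "(y \<longlongrightarrow> y0) F"
  shows "((\<lambda>t. vector [x t, y t] :: real^2) \<longlongrightarrow> vector [x0, y0]) F"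
proof (intro vec_tendstoI)
  fix i :: 2
  show "((\<lambda>t. (vector [x t, y t] :: real^2) $ i) \<longlongrightarrow> (vector [x0, y0] :: real^2) $ i) F"
    using assms exhaust_2[of i] by auto
qed

definition rot :: "real \<Rightarrow> real \<Rightarrow> real^2^2" where
  "rot c s = mat2 c (- s) s c"

lemma orthogonal_rot: "c^2 + s^2 = 1 \<Longrightarrow> orthogonal_matrix (rot c s)"
  by (simp add: orthogonal_matrix_def rot_def mat2_eq_iff power2_eq_square algebra_simps)

lemma mdiag_vector_2: "mdiag (vector [x, y]) = mat2 x 0 0 y"
  by (simp add: mat2_eq_iff)

lemma transpose_mat2 [simp]: "transpose (mat2 a b c d) = mat2 a c b d"
  by (simp add: mat2_eq_iff)

lemma mpow_mat2_diag: "mpow (mat2 x 0 0 y) r = mat2 (x powr r) 0 0 (y powr r)"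
proof -
  have "(\<chi> i. (vector [x, y] :: real^2) $ i powr r) = vector [x powr r, y powr r]"
    by (simp add: vec2_eq_iff)
  then show ?thesis
    using mpow_mdiag[of "vector [x, y] :: real^2" r] by (simp add: mdiag_vector_2)
qed

lemma pos_def_mat2_diag: "0 < x \<Longrightarrow> 0 < y \<Longrightarrow> pos_def (mat2 x 0 0 y)"
  using pos_def_orth_diag_iff[OF orthogonal_matrix_id, of "vector [x, y] :: real^2"]
  by (simp add: orth_diag_mat_1 mdiag_vector_2 forall_2)

lemma invertible_mat2_diag: "x \<noteq> 0 \<Longrightarrow> y \<noteq> 0 \<Longrightarrow> invertible (mat2 x 0 0 y)"
  using invertible_mdiag[of "vector [x, y] :: real^2"] by (simp add: mdiag_vector_2 forall_2)

lemma orth_diag_rot: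
  "orth_diag (rot c s) (vector [x, y]) =
     mat2 (c * c * x + s * s * y) (c * s * (x - y)) (c * s * (x - y)) (s * s * x + c * c * y)"
  by (simp add: orth_diag_def rot_def mat2_eq_iff algebra_simps)

definition eig_disc :: "real^2^2 \<Rightarrow> real" where
  "eig_disc S = (S $ 1 $ 1 - S $ 2 $ 2)^2 + 4 * (S $ 1 $ 2)^2"

definition eig_max :: "real^2^2 \<Rightarrow> real" where
  "eig_max S = (S $ 1 $ 1 + S $ 2 $ 2 + sqrt (eig_disc S)) / 2"

definition eig_min :: "real^2^2 \<Rightarrow> real" where
  "eig_min S = (S $ 1 $ 1 + S $ 2 $ 2 - sqrt (eig_disc S)) / 2"

lemma eig_disc_nonneg: "0 \<le> eig_disc S"
  by (simp add: eig_disc_def)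

lemma eig_max_minus_eig_min: "eig_max S - eig_min S = sqrt (eig_disc S)"
  by (simp add: eig_max_def eig_min_def field_simps)

lemma eig_max_plus_eig_min: "eig_max S + eig_min S = trace S"
  by (simp add: eig_max_def eig_min_def trace_def sum_2 field_simps)

lemma eig_min_le_eig_max: "eig_min S \<le> eig_max S"
  by (simp add: eig_max_def eig_min_def eig_disc_def)

lemma eig_min_less_eig_max_iff: "eig_min S < eig_max S \<longleftrightarrow> 0 < eig_disc S"
  using eig_max_minus_eig_min[of S] by (metis diff_gt_0_iff_gt real_sqrt_gt_0_iff)

lemma symmetric_2_eq_orth_diag_rot:
  fixes S :: "real^2^2"
  assumes sym: "transpose S = S"
  obtains c s where "c^2 + s^2 = 1" "S = orth_diag (rot c s) (vector [eig_max S, eig_min S])"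
proof (cases "eig_disc S = 0")
  case True
  then have "S $ 1 $ 1 = S $ 2 $ 2" "S $ 1 $ 2 = 0"
    by (simp_all add: eig_disc_def add_nonneg_eq_0_iff)
  then show ?thesis
    using that[of 1 0] symmetric_2_nth[OF sym] True
    by (simp add: orth_diag_rot mat2_eq_iff eig_max_def eig_min_def)
next
  case False
  define R where "R = sqrt (eig_disc S)"
  have "0 < R"
    using False eig_disc_nonneg[of S] by (simp add: R_def)
  have R2: "R^2 = (S $ 1 $ 1 - S $ 2 $ 2)^2 + (2 * S $ 1 $ 2)^2"
    using eig_disc_nonneg[of S] by (simp add: R_def eig_disc_def power_mult_distrib)
  have "((S $ 1 $ 1 - S $ 2 $ 2) / R)^2 + (2 * S $ 1 $ 2 / R)^2 = 1"
    unfolding power_divide add_divide_distrib[symmetric] R2[symmetric] using \<open>0 < R\<close> by simp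
  then obtain \<phi> where \<phi>: "cos \<phi> = (S $ 1 $ 1 - S $ 2 $ 2) / R" "sin \<phi> = 2 * S $ 1 $ 2 / R"
    using sincos_total_2pi by metis
  \<comment> \<open>The rotation by the half angle \<open>\<phi>/2\<close> diagonalises \<open>S\<close>.\<close>
  define c s where "c = cos (\<phi>/2)" and "s = sin (\<phi>/2)"
  have cs: "c * c + s * s = 1" "c * c - s * s = cos \<phi>" "2 * c * s = sin \<phi>"
    using sin_cos_squared_add[of "\<phi>/2"] cos_double[of "\<phi>/2"] sin_double[of "\<phi>/2"]
    by (simp_all add: c_def s_def power2_eq_square mult.commute)
  have eig: "2 * eig_max S = S $ 1 $ 1 + S $ 2 $ 2 + R" "2 * eig_min S = S $ 1 $ 1 + S $ 2 $ 2 - R"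
    by (simp_all add: eig_max_def eig_min_def R_def)
  have rel: "R * (c * c - s * s) = S $ 1 $ 1 - S $ 2 $ 2" "R * (2 * c * s) = 2 * S $ 1 $ 2"
    using cs \<phi> \<open>0 < R\<close> by simp_all
  have "c * c * eig_max S + s * s * eig_min S = S $ 1 $ 1"
    "s * s * eig_max S + c * c * eig_min S = S $ 2 $ 2"
    "c * s * (eig_max S - eig_min S) = S $ 1 $ 2"
    using eig rel cs(1) by algebra+
  then have "S = orth_diag (rot c s) (vector [eig_max S, eig_min S])"
    using symmetric_2_nth[OF sym] by (simp add: orth_diag_rot mat2_eq_iff)
  then show ?thesis
    using that cs(1) by (simp add: power2_eq_square)
qed

lemma symmetric_2_eq_orth_diag:
  fixes S :: "real^2^2"
  assumes "transpose S = S"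
  obtains U where "orthogonal_matrix U" "S = orth_diag U (vector [eig_max S, eig_min S])"
proof -
  obtain c s where "c^2 + s^2 = 1" "S = orth_diag (rot c s) (vector [eig_max S, eig_min S])"
    using symmetric_2_eq_orth_diag_rot[OF assms] .
  then show ?thesis
    using that orthogonal_rot by blast
qed

lemma pos_def_2_iff:
  fixes S :: "real^2^2"
  assumes "transpose S = S"
  shows "pos_def S \<longleftrightarrow> 0 < eig_min S"
proof -
  define v :: "real^2" where "v = vector [eig_max S, eig_min S]"
  obtain U where U: "orthogonal_matrix U" and S: "S = orth_diag U v"
    using symmetric_2_eq_orth_diag[OF assms] unfolding v_def .
  have "pos_def S \<longleftrightarrow> (\<forall>i. 0 < v $ i)"
    by (subst S) (rule pos_def_orth_diag_iff[OF U])
  then show ?thesis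
    using eig_min_le_eig_max[of S] by (auto simp: v_def forall_2)
qed

lemma eig_min_pos:
  fixes S :: "real^2^2"
  assumes "pos_def S"
  shows "0 < eig_min S"
proof -
  have "transpose S = S"
    using assms by (simp add: pos_def_def)
  then show ?thesis
    using assms pos_def_2_iff by blast
qed

lemma pos_def_2_eq_orth_diag:
  fixes S :: "real^2^2"
  assumes "pos_def S"
  obtains U d where "orthogonal_matrix U" "S = orth_diag U d" "\<forall>i. 0 < d $ i"
proof -
  have sym: "transpose S = S"
    using assms by (simp add: pos_def_def)
  define v :: "real^2" where "v = vector [eig_max S, eig_min S]"
  obtain U where U: "orthogonal_matrix U" and S: "S = orth_diag U v"
    using symmetric_2_eq_orth_diag[OF sym] unfolding v_def .
  have "\<forall>i. 0 < v $ i"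
    using assms pos_def_orth_diag_iff[OF U, of v] by (simp add: S[symmetric])
  with U S show ?thesis
    by (rule that)
qed

lemma eig_max_mult_eig_min:
  fixes S :: "real^2^2"
  assumes "transpose S = S"
  shows "eig_max S * eig_min S = det S"
proof -
  define v :: "real^2" where "v = vector [eig_max S, eig_min S]"
  obtain U where U: "orthogonal_matrix U" and S: "S = orth_diag U v"
    using symmetric_2_eq_orth_diag[OF assms] unfolding v_def .
  have "det S = v $ 1 * v $ 2"
    by (subst S) (simp add: det_orth_diag[OF U] prod_UNIV_2)
  then show ?thesis
    by (simp add: v_def)
qed

lemma diag_le_eig_max: "S $ i $ i \<le> eig_max S"
proof -
  have "\<bar>S $ 1 $ 1 - S $ 2 $ 2\<bar> \<le> sqrt (eig_disc S)"
    by (simp add: eig_disc_def real_le_rsqrt)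
  then show ?thesis
    using exhaust_2[of i] by (auto simp: eig_max_def)
qed

lemma eig_min_le_diag: "eig_min S \<le> S $ i $ i"
  using diag_le_eig_max[of S 1] diag_le_eig_max[of S 2] eig_max_plus_eig_min[of S] exhaust_2[of i]
  by (auto simp: trace_def sum_2)

lemma eig_min_characteristic:
  fixes S :: "real^2^2"
  assumes "transpose S = S"
  shows "(S $ 1 $ 1 - eig_min S) * (S $ 2 $ 2 - eig_min S) = (S $ 1 $ 2)^2"
proof -
  have "eig_min S * eig_min S - trace S * eig_min S + det S = 0"
    unfolding eig_max_mult_eig_min[OF assms, symmetric] eig_max_plus_eig_min[symmetric]
    by (simp add: algebra_simps)
  then show ?thesis
    using symmetric_2_nth[OF assms] by (simp add: trace_def sum_2 det_2 algebra_simps power2_eq_square)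
qed

lemma corner_quadratic_form:
  fixes X :: "real^2^2"
  assumes sym: "transpose X = X"
  defines "u \<equiv> vector [- X $ 1 $ 2, X $ 1 $ 1] :: real^2"
  shows "u \<bullet> ((X - mat2 0 0 0 1) *v u) = X $ 1 $ 1 * (det X - X $ 1 $ 1)"
  using symmetric_2_nth[OF sym] by (simp add: u_def inner_2 det_2 algebra_simps power2_eq_square)

lemma tendsto_eig [tendsto_intros]:
  fixes S :: "'a \<Rightarrow> real^2^2"
  assumes "(S \<longlongrightarrow> S0) F"
  shows "((\<lambda>x. eig_disc (S x)) \<longlongrightarrow> eig_disc S0) F"
    and "((\<lambda>x. eig_max (S x)) \<longlongrightarrow> eig_max S0) F"
    and "((\<lambda>x. eig_min (S x)) \<longlongrightarrow> eig_min S0) F"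
  unfolding eig_disc_def eig_max_def eig_min_def by (intro tendsto_intros assms; simp)+

lemma pos_def_mfun:
  fixes S :: "real^2^2"
  assumes "pos_def S" "\<And>x. 0 < x \<Longrightarrow> 0 < f x"
  shows "pos_def (mfun f S)"
proof -
  obtain U d where "orthogonal_matrix U" "S = orth_diag U d" "\<forall>i. 0 < d $ i"
    using pos_def_2_eq_orth_diag[OF assms(1)] .
  then show ?thesis
    using assms(2) by (simp add: mfun_orth_diag pos_def_orth_diag_iff)
qed

lemma mfun_mfun:
  fixes S :: "real^2^2"
  assumes "pos_def S" "\<And>x. 0 < x \<Longrightarrow> g (f x) = h x"
  shows "mfun g (mfun f S) = mfun h S"
proof -
  obtain U d where "orthogonal_matrix U" "S = orth_diag U d" "\<forall>i. 0 < d $ i"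
    using pos_def_2_eq_orth_diag[OF assms(1)] .
  moreover from this have "(\<chi> i. g ((\<chi> i. f (d $ i)) $ i)) = (\<chi> i. h (d $ i))"
    using assms(2) by (simp add: vec_eq_iff)
  ultimately show ?thesis
    by (simp add: mfun_orth_diag)
qed

lemma mpow_1:
  fixes S :: "real^2^2"
  assumes "pos_def S"
  shows "mpow S 1 = S"
proof -
  obtain U d where U: "orthogonal_matrix U" and S: "S = orth_diag U d" and d: "\<forall>i. 0 < d $ i"
    using pos_def_2_eq_orth_diag[OF assms] .
  have "(\<chi> i. d $ i powr 1) = d"
    using d by (simp add: vec_eq_iff less_imp_le)
  then show ?thesis
    by (simp add: S mpow_orth_diag[OF U])
qed

lemma mpow_mpow:
  fixes S :: "real^2^2"
  assumes "pos_def S"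
  shows "mpow (mpow S s) t = mpow S (s * t)"
  unfolding mpow_def using assms by (rule mfun_mfun) (simp add: powr_powr)

lemma mlog_mpow:
  fixes S :: "real^2^2"
  assumes "pos_def S"
  shows "mlog (mpow S s) = s *\<^sub>R mlog S"
proof -
  obtain U d where "orthogonal_matrix U" "S = orth_diag U d" "\<forall>i. 0 < d $ i"
    using pos_def_2_eq_orth_diag[OF assms] .
  moreover from this have "(\<chi> i. ln ((\<chi> i. d $ i powr s) $ i)) = s *\<^sub>R (\<chi> i. ln (d $ i))"
    by (simp add: vec_eq_iff ln_powr)
  ultimately show ?thesis
    by (simp add: mpow_orth_diag mlog_orth_diag orth_diag_scaleR)
qed

lemma det_mpow:
  fixes S :: "real^2^2"
  assumes "pos_def S"
  shows "det (mpow S s) = det S powr s"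
proof -
  obtain U d where "orthogonal_matrix U" "S = orth_diag U d" "\<forall>i. 0 < d $ i"
    using pos_def_2_eq_orth_diag[OF assms] .
  then show ?thesis
    by (simp add: mpow_orth_diag det_orth_diag prod_UNIV_2 powr_mult less_imp_le)
qed

lemma mpow_half_square:
  fixes S :: "real^2^2"
  assumes "pos_def S"
  shows "mpow (S ** S) (1/2) = S"
proof -
  obtain U d where U: "orthogonal_matrix U" "S = orth_diag U d" "\<forall>i. 0 < d $ i"
    using pos_def_2_eq_orth_diag[OF assms] .
  moreover from this have "(\<chi> i. (d * d) $ i powr (1/2)) = d"
    by (auto simp: vec_eq_iff powr_half_sqrt less_imp_le)
  ultimately show ?thesis
    by (simp add: orth_diag_mult mpow_orth_diag)
qed

lemma pos_def_2_matrix_inv: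
  fixes S :: "real^2^2"
  assumes "pos_def S"
  shows "pos_def (matrix_inv S)" and "matrix_inv (matrix_inv S) = S"
proof -
  obtain U d where U: "orthogonal_matrix U" "S = orth_diag U d" "\<forall>i. 0 < d $ i"
    using pos_def_2_eq_orth_diag[OF assms] .
  then have inv: "matrix_inv S = orth_diag U (\<chi> i. 1 / d $ i)"
    by (simp add: matrix_inv_orth_diag less_imp_neq[symmetric])
  then show "pos_def (matrix_inv S)"
    using U by (simp add: pos_def_orth_diag_iff)
  have "(\<chi> i. 1 / (\<chi> i. 1 / d $ i) $ i) = d"
    by (simp add: vec_eq_iff)
  then show "matrix_inv (matrix_inv S) = S"
    using U by (simp add: inv matrix_inv_orth_diag less_imp_neq[symmetric])
qed

section \<open>Interpolation formula and continuity\<close>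

text \<open>For distinct eigenvalues, \<open>mfun g S\<close> is the affine interpolant of \<open>g\<close> at the two
  eigenvalues, evaluated at \<open>S\<close>.\<close>
definition mfun_interp :: "(real \<Rightarrow> real) \<Rightarrow> real^2^2 \<Rightarrow> real^2^2" where
  "mfun_interp g S =
     g (eig_min S) *\<^sub>R mat 1 +
     ((g (eig_max S) - g (eig_min S)) / (eig_max S - eig_min S)) *\<^sub>R (S - eig_min S *\<^sub>R mat 1)"

lemma mfun_eq_interp:
  fixes S :: "real^2^2"
  assumes sym: "transpose S = S" and gap: "eig_min S < eig_max S"
  shows "mfun g S = mfun_interp g S"
proof -
  define m1 m2 where "m1 = eig_max S" and "m2 = eig_min S"
  obtain U where U: "orthogonal_matrix U" and S: "S = orth_diag U (vector [m1, m2])"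
    using symmetric_2_eq_orth_diag[OF sym] unfolding m1_def m2_def .
  define \<kappa> where "\<kappa> = (g m1 - g m2) / (m1 - m2)"
  have "mfun_interp g S = orth_diag U (g m2 *\<^sub>R 1 + \<kappa> *\<^sub>R (vector [m1, m2] - m2 *\<^sub>R 1))"
    unfolding mfun_interp_def m1_def[symmetric] m2_def[symmetric] \<kappa>_def[symmetric]
    by (simp only: S orth_diag_add orth_diag_scaleR orth_diag_diff orth_diag_1[OF U])
  also have "g m2 *\<^sub>R 1 + \<kappa> *\<^sub>R (vector [m1, m2] - m2 *\<^sub>R 1) =
      (\<chi> i. g ((vector [m1, m2] :: real^2) $ i))"
    using gap by (simp add: vec2_eq_iff \<kappa>_def m1_def m2_def)
  finally show ?thesis
    by (simp add: S mfun_orth_diag[OF U])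
qed

lemma tendsto_mfun:
  fixes S :: "'a \<Rightarrow> real^2^2"
  assumes lim: "(S \<longlongrightarrow> S0) F"
    and sym: "\<forall>\<^sub>F x in F. transpose (S x) = S x"
    and D: "\<forall>\<^sub>F x in F. eig_min (S x) \<in> D \<and> eig_max (S x) \<in> D"
    and sym0: "transpose S0 = S0" and gap0: "eig_min S0 < eig_max S0"
    and D0: "eig_min S0 \<in> D" "eig_max S0 \<in> D"
    and g: "continuous_on D g"
  shows "((\<lambda>x. mfun g (S x)) \<longlongrightarrow> mfun g S0) F"
proof -
  have "((\<lambda>x. eig_max (S x) - eig_min (S x)) \<longlongrightarrow> eig_max S0 - eig_min S0) F"
    by (intro tendsto_intros lim)
  then have "\<forall>\<^sub>F x in F. 0 < eig_max (S x) - eig_min (S x)"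
    by (rule order_tendstoD) (use gap0 in simp)
  with sym have "\<forall>\<^sub>F x in F. mfun_interp g (S x) = mfun g (S x)"
    by eventually_elim (simp add: mfun_eq_interp)
  moreover have "((\<lambda>x. mfun_interp g (S x)) \<longlongrightarrow> mfun_interp g S0) F"
  proof -
    have "((\<lambda>x. g (eig_max (S x))) \<longlongrightarrow> g (eig_max S0)) F"
      by (rule continuous_on_tendsto_compose[OF g tendsto_eig(2)[OF lim] D0(2)])
        (use D in \<open>auto elim: eventually_mono\<close>)
    moreover have "((\<lambda>x. g (eig_min (S x))) \<longlongrightarrow> g (eig_min S0)) F"
      by (rule continuous_on_tendsto_compose[OF g tendsto_eig(3)[OF lim] D0(1)])
        (use D in \<open>auto elim: eventually_mono\<close>)
    ultimately show ?thesis
      unfolding mfun_interp_def by (intro tendsto_intros lim) (use gap0 in simp_all)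
  qed
  ultimately have "((\<lambda>x. mfun g (S x)) \<longlongrightarrow> mfun_interp g S0) F"
    by (rule Lim_transform_eventually[rotated])
  then show ?thesis
    using mfun_eq_interp[OF sym0 gap0] by simp
qed

lemma eventually_pos_def_eig:
  fixes S :: "'a \<Rightarrow> real^2^2"
  assumes "\<forall>\<^sub>F x in F. pos_def (S x)"
  shows "\<forall>\<^sub>F x in F. transpose (S x) = S x \<and> eig_min (S x) \<in> {0<..} \<and> eig_max (S x) \<in> {0<..}"
  using assms
proof eventually_elim
  case (elim x)
  then show ?case
    using eig_min_pos[of "S x"] eig_min_le_eig_max[of "S x"] by (simp add: pos_def_def)
qed

lemma tendsto_mpow:
  fixes S :: "'a \<Rightarrow> real^2^2"
  assumes lim: "(S \<longlongrightarrow> S0) F" and pd: "\<forall>\<^sub>F x in F. pos_def (S x)"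
    and sym0: "transpose S0 = S0" and gap0: "eig_min S0 < eig_max S0" and "0 \<le> eig_min S0"
    and "0 < r"
  shows "((\<lambda>x. mpow (S x) r) \<longlongrightarrow> mpow S0 r) F"
proof -
  have "\<forall>\<^sub>F x in F. transpose (S x) = S x"
    and "\<forall>\<^sub>F x in F. eig_min (S x) \<in> {0..} \<and> eig_max (S x) \<in> {0..}"
    using eventually_pos_def_eig[OF pd] by (auto elim: eventually_mono)
  moreover have "eig_min S0 \<in> {0..}" "eig_max S0 \<in> {0..}"
    using \<open>0 \<le> eig_min S0\<close> gap0 by simp_all
  moreover have "continuous_on {0..} (\<lambda>x::real. x powr r)"
    using \<open>0 < r\<close> by (intro continuous_on_powr' continuous_intros) auto
  ultimately show ?thesis
    unfolding mpow_def using tendsto_mfun[OF lim _ _ sym0 gap0] by blast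
qed

lemma tendsto_mlog:
  fixes S :: "'a \<Rightarrow> real^2^2"
  assumes lim: "(S \<longlongrightarrow> S0) F" and pd: "\<forall>\<^sub>F x in F. pos_def (S x)"
    and pd0: "pos_def S0" and gap0: "eig_min S0 < eig_max S0"
  shows "((\<lambda>x. mlog (S x)) \<longlongrightarrow> mlog S0) F"
proof -
  have sym0: "transpose S0 = S0"
    using pd0 by (simp add: pos_def_def)
  have "\<forall>\<^sub>F x in F. transpose (S x) = S x"
    and "\<forall>\<^sub>F x in F. eig_min (S x) \<in> {0<..} \<and> eig_max (S x) \<in> {0<..}"
    using eventually_pos_def_eig[OF pd] by (auto elim: eventually_mono)
  moreover have "eig_min S0 \<in> {0<..}" "eig_max S0 \<in> {0<..}"
    using eig_min_pos[OF pd0] gap0 by simp_all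
  moreover have "continuous_on {0<..} (ln :: real \<Rightarrow> real)"
    by (simp add: continuous_on_def tendsto_ln)
  ultimately show ?thesis
    unfolding mlog_def using tendsto_mfun[OF lim _ _ sym0 gap0] by blast
qed

lemma gmean_eqI:
  fixes X G :: "real^2^2"
  assumes X: "pos_def X" and G: "pos_def G"
  shows "gmean X (G ** matrix_inv X ** G) = G"
proof -
  obtain U d where U: "orthogonal_matrix U" and Xd: "X = orth_diag U d" and d: "\<forall>i. 0 < d $ i"
    using pos_def_2_eq_orth_diag[OF X] .
  define H Hi where "H = orth_diag U (\<chi> i. d $ i powr (1/2))"
    and "Hi = orth_diag U (\<chi> i. d $ i powr (-1/2))"
  have pows: "mpow X (1/2) = H" "mpow X (-1/2) = Hi"
    by (simp_all add: H_def Hi_def Xd mpow_orth_diag[OF U])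
  have d0: "\<forall>i. d $ i \<noteq> 0"
    using d by (metis order_less_irrefl)
  then have "(\<chi> i. d $ i powr (1/2)) * (\<chi> i. d $ i powr (-1/2)) = 1"
    by (simp add: vec_eq_iff powr_add[symmetric])
  then have "H ** Hi = mat 1" "Hi ** H = mat 1"
    by (simp_all add: H_def Hi_def orth_diag_mult[OF U] orth_diag_1[OF U] mult.commute)
  have "(\<chi> i. d $ i powr (-1/2)) * (\<chi> i. d $ i powr (-1/2)) = (\<chi> i. 1 / d $ i)"
    using d by (simp add: vec_eq_iff powr_add[symmetric] powr_minus_divide less_imp_le)
  then have "matrix_inv X = Hi ** Hi"
    using d0 by (simp add: Xd Hi_def orth_diag_mult[OF U] matrix_inv_orth_diag[OF U])
  define T where "T = Hi ** G ** Hi"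
  have "pos_def T"
    using pos_def_congruence[OF G, of Hi] \<open>H ** Hi = mat 1\<close> \<open>Hi ** H = mat 1\<close>
    by (auto simp: T_def Hi_def invertible_def)
  have "Hi ** (G ** matrix_inv X ** G) ** Hi = T ** T"
    by (simp add: \<open>matrix_inv X = Hi ** Hi\<close> T_def matrix_mul_assoc)
  then have "gmean X (G ** matrix_inv X ** G) = H ** T ** H"
    unfolding gmean_def pows by (simp add: mpow_half_square[OF \<open>pos_def T\<close>])
  also have "\<dots> = (H ** Hi) ** G ** (Hi ** H)"
    by (simp add: T_def matrix_mul_assoc)
  finally show ?thesis
    by (simp add: \<open>H ** Hi = mat 1\<close> \<open>Hi ** H = mat 1\<close>)
qed

section \<open>The limit matrix\<close>

lemma eig_min_bounds:
  fixes S :: "real^2^2"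
  assumes "pos_def S"
  shows "det S / trace S \<le> eig_min S" and "eig_min S \<le> det S / S $ 1 $ 1"
proof -
  have sym: "transpose S = S"
    using assms by (simp add: pos_def_def)
  have m2: "0 < eig_min S"
    using eig_min_pos[OF assms] .
  have m1: "S $ 1 $ 1 \<le> eig_max S" "eig_max S \<le> trace S"
    using diag_le_eig_max[of S 1] eig_max_plus_eig_min[of S] m2 by simp_all
  have "0 < S $ 1 $ 1"
    using m2 eig_min_le_diag[of S 1] by simp
  have det: "det S = eig_max S * eig_min S"
    using eig_max_mult_eig_min[OF sym] by simp
  show "det S / trace S \<le> eig_min S"
    unfolding det using m1 m2 \<open>0 < S $ 1 $ 1\<close> by (simp add: divide_le_eq mult_left_mono)
  show "eig_min S \<le> det S / S $ 1 $ 1"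
    unfolding det using m1 m2 \<open>0 < S $ 1 $ 1\<close> by (simp add: le_divide_eq mult_right_mono)
qed

text \<open>For symmetric \<open>S\<close>, \<open>eig_weight S\<close> is the squared second coordinate of a unit eigenvector
  for \<open>eig_max S\<close>.\<close>
definition eig_weight :: "real^2^2 \<Rightarrow> real" where
  "eig_weight S = (S $ 2 $ 2 - eig_min S) / (eig_max S - eig_min S)"

lemma mfun_interp_diag:
  assumes gap: "eig_min S < eig_max S"
  shows "mfun_interp g S $ 1 $ 1 = g (eig_min S) + (g (eig_max S) - g (eig_min S)) * (1 - eig_weight S)"
    and "mfun_interp g S $ 2 $ 2 = g (eig_min S) + (g (eig_max S) - g (eig_min S)) * eig_weight S"
proof -
  define m1 m2 where "m1 = eig_max S" and "m2 = eig_min S"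
  have "m1 - m2 \<noteq> 0"
    using gap by (simp add: m1_def m2_def)
  have diag: "mfun_interp g S $ i $ i = g m2 + (g m1 - g m2) * ((S $ i $ i - m2) / (m1 - m2))" for i
    by (simp add: mfun_interp_def m1_def m2_def)
  have "(S $ 1 $ 1 - m2) / (m1 - m2) = 1 - eig_weight S"
    using \<open>m1 - m2 \<noteq> 0\<close> eig_max_plus_eig_min[of S]
    by (simp add: eig_weight_def m1_def m2_def trace_def sum_2 field_simps)
  then show "mfun_interp g S $ 1 $ 1 = g (eig_min S) + (g (eig_max S) - g (eig_min S)) * (1 - eig_weight S)"
    using diag[of 1] by (simp add: m1_def m2_def)
  show "mfun_interp g S $ 2 $ 2 = g (eig_min S) + (g (eig_max S) - g (eig_min S)) * eig_weight S"
    using diag[of 2] by (simp add: eig_weight_def m1_def m2_def)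
qed

lemma eig_weight_bounds:
  fixes S :: "real^2^2"
  assumes sym: "transpose S = S" and "eig_min S < S $ 1 $ 1"
  shows "0 \<le> eig_weight S" and "eig_weight S \<le> (S $ 1 $ 2)^2 / (S $ 1 $ 1 - eig_min S)^2"
proof -
  define m1 m2 where "m1 = eig_max S" and "m2 = eig_min S"
  have d: "0 < S $ 1 $ 1 - m2" "S $ 1 $ 1 - m2 \<le> m1 - m2"
    using assms(2) diag_le_eig_max[of S 1] by (simp_all add: m1_def m2_def)
  have "(S $ 1 $ 1 - m2) * (S $ 2 $ 2 - m2) = (S $ 1 $ 2)^2"
    using eig_min_characteristic[OF sym] by (simp add: m2_def)
  then have "S $ 2 $ 2 - m2 = (S $ 1 $ 2)^2 / (S $ 1 $ 1 - m2)"
    using d(1) by (simp add: eq_divide_eq mult.commute)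
  then have w: "eig_weight S = (S $ 1 $ 2)^2 / ((S $ 1 $ 1 - m2) * (m1 - m2))"
    by (simp add: eig_weight_def m1_def[symmetric] m2_def[symmetric])
  show "0 \<le> eig_weight S"
    unfolding w using d by simp
  show "eig_weight S \<le> (S $ 1 $ 2)^2 / (S $ 1 $ 1 - eig_min S)^2"
    unfolding w m2_def[symmetric] power2_eq_square[of "S $ 1 $ 1 - m2"] using d
    by (intro divide_left_mono mult_left_mono) simp_all
qed

text \<open>The matrix \<open>M\<close> below is \<open>a e\<^sub>2 e\<^sub>2\<^sup>T + x w w\<^sup>T\<close> with \<open>w = (1, 1/k)\<close>.\<close>
lemma rank_one_update_eig_bounds:
  fixes a x k :: real
  assumes a: "0 < a" "a < 1" and x: "1 < x" and k: "1 \<le> k"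
  defines "M \<equiv> mat2 x (x / k) (x / k) (a + x / k^2)"
  shows "pos_def M" and "eig_min M < eig_max M"
    and "a * x / (x + a + x / k^2) \<le> eig_min M" and "eig_min M \<le> a"
    and "0 \<le> eig_weight M" and "eig_weight M \<le> (x / (x - 1))^2 / k^2"
    and "1 < eig_max M" and "eig_max M \<le> 2 * x + 1"
proof -
  have sym: "transpose M = M"
    by (simp add: M_def mat2_eq_iff)
  have det: "det M = a * x" and tr: "trace M = x + a + x / k^2" and M11: "M $ 1 $ 1 = x"
    using k by (simp_all add: M_def det_2 trace_def sum_2 field_simps power2_eq_square)
  have "x \<le> eig_max M"
    using diag_le_eig_max[of M 1] by (simp add: M_def)
  then have "0 < eig_max M * eig_min M"
    using eig_max_mult_eig_min[OF sym] det a x by simp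
  then show pd: "pos_def M"
    using \<open>x \<le> eig_max M\<close> x pos_def_2_iff[OF sym] by (simp add: zero_less_mult_iff)
  have "0 < eig_disc M"
    using x k by (simp add: eig_disc_def M_def add_nonneg_pos)
  then show "eig_min M < eig_max M"
    by (simp add: eig_min_less_eig_max_iff)
  show "a * x / (x + a + x / k^2) \<le> eig_min M"
    using eig_min_bounds(1)[OF pd] by (simp add: det tr)
  show "eig_min M \<le> a"
    using eig_min_bounds(2)[OF pd] x by (simp add: det M11)
  then have "eig_min M < M $ 1 $ 1" and "x - 1 \<le> x - eig_min M"
    using a x by (simp_all add: M_def)
  then show "0 \<le> eig_weight M"
    using eig_weight_bounds(1)[OF sym] by blast
  have "eig_weight M \<le> (x / k)^2 / (x - eig_min M)^2"
    using eig_weight_bounds(2)[OF sym \<open>eig_min M < M $ 1 $ 1\<close>] by (simp add: M_def)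
  also have "\<dots> \<le> (x / k)^2 / (x - 1)^2"
    using \<open>x - 1 \<le> x - eig_min M\<close> x by (intro divide_left_mono power_mono) simp_all
  also have "\<dots> = (x / (x - 1))^2 / k^2"
    by (simp add: power_divide)
  finally show "eig_weight M \<le> (x / (x - 1))^2 / k^2" .
  show "1 < eig_max M"
    using \<open>x \<le> eig_max M\<close> x by simp
  have "1 \<le> k^2"
    using k by (simp add: one_le_power)
  then have "x / k^2 \<le> x"
    using x by (simp add: divide_le_eq mult_le_cancel_left1)
  then show "eig_max M \<le> 2 * x + 1"
    using eig_max_plus_eig_min[of M] tr pd pos_def_2_iff[OF sym] a by simp
qed

lemma mlog_nth_2_2:
  fixes S :: "real^2^2"
  assumes "transpose S = S" "eig_min S < eig_max S"
  shows "mlog S $ 2 $ 2 = ln (eig_min S) * (1 - eig_weight S) + eig_weight S * ln (eig_max S)"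
  using mfun_interp_diag(2)[OF assms(2), of ln]
  by (simp add: mlog_def mfun_eq_interp[OF assms] algebra_simps)

lemma mpow_nth_1_1_minus_det_powr:
  fixes S :: "real^2^2"
  assumes pd: "pos_def S" and gap: "eig_min S < eig_max S"
  shows "mpow S s $ 1 $ 1 - det S powr s =
    eig_weight S * eig_min S powr s + eig_max S powr s * (1 - eig_weight S - eig_min S powr s)"
proof -
  have sym: "transpose S = S"
    using pd by (simp add: pos_def_def)
  have "0 < eig_min S"
    using eig_min_pos[OF pd] .
  then have "det S powr s = eig_max S powr s * eig_min S powr s"
    using gap by (simp add: eig_max_mult_eig_min[OF sym, symmetric] powr_mult)
  then show ?thesis
    using mfun_interp_diag(1)[OF gap, of "\<lambda>x. x powr s"]
    by (simp add: mpow_def mfun_eq_interp[OF sym gap] algebra_simps)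
qed

text \<open>The limit of \<open>(1 - \<alpha>) a\<^sup>r + \<alpha> b\<^sup>r\<close> as \<open>t \<rightarrow> 0\<close> in the construction below, where
  \<open>a\<^sup>r \<rightarrow> diag (0, 1)\<close> and \<open>b\<^sup>r \<rightarrow> (1 + k\<^sup>2)\<^bsup>r - 1\<^esup> (k, 1) (k, 1)\<^sup>T\<close>.\<close>
definition limit_power_mean :: "real \<Rightarrow> real \<Rightarrow> real \<Rightarrow> real^2^2" where
  "limit_power_mean \<alpha> r k =
     (1 - \<alpha>) *\<^sub>R mat2 0 0 0 1 + (\<alpha> * (1 + k^2) powr (r - 1)) *\<^sub>R mat2 (k^2) k k 1"

lemma limit_power_mean_asymptotics:
  fixes \<alpha> r :: real
  assumes \<alpha>: "0 < \<alpha>" "\<alpha> < 1" and r: "0 < r"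
  defines "M \<equiv> limit_power_mean \<alpha> r"
  shows "\<forall>\<^sub>F k in at_top. pos_def (M k) \<and> eig_min (M k) < eig_max (M k) \<and> 0 \<le> eig_weight (M k)"
    and "((\<lambda>k. eig_min (M k)) \<longlongrightarrow> 1 - \<alpha>) at_top"
    and "((\<lambda>k. eig_weight (M k)) \<longlongrightarrow> 0) at_top"
    and "((\<lambda>k. eig_weight (M k) * ln (eig_max (M k))) \<longlongrightarrow> 0) at_top"
proof -
  define x where "x k = \<alpha> * k^2 * (1 + k^2) powr (r - 1)" for k :: real
  define lower bound where "lower k = (1 - \<alpha>) * x k / (x k + (1 - \<alpha>) + x k / k^2)"
    and "bound k = (x k / (x k - 1))^2 / k^2" for k
  have M_eq: "M k = mat2 (x k) (x k / k) (x k / k) ((1 - \<alpha>) + x k / k^2)" if "k \<noteq> 0" for k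
    using that by (simp add: M_def limit_power_mean_def x_def mat2_eq_iff power2_eq_square)
  have "filterlim x at_top at_top"
    unfolding x_def using \<alpha> r by real_asymp
  then have "\<forall>\<^sub>F k in at_top. 1 < x k \<and> 1 \<le> k"
    by (auto simp: filterlim_at_top_dense eventually_conj_iff eventually_ge_at_top)
  then have B: "\<forall>\<^sub>F k in at_top. pos_def (M k) \<and> eig_min (M k) < eig_max (M k) \<and>
      lower k \<le> eig_min (M k) \<and> eig_min (M k) \<le> 1 - \<alpha> \<and>
      0 \<le> eig_weight (M k) \<and> eig_weight (M k) \<le> bound k \<and>
      1 < eig_max (M k) \<and> eig_max (M k) \<le> 2 * x k + 1"
  proof eventually_elim
    case (elim k)
    then show ?case
      using rank_one_update_eig_bounds[of "1 - \<alpha>" "x k" k] \<alpha>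
      by (simp add: M_eq lower_def bound_def)
  qed
  then show "\<forall>\<^sub>F k in at_top. pos_def (M k) \<and> eig_min (M k) < eig_max (M k) \<and> 0 \<le> eig_weight (M k)"
    by (auto elim: eventually_mono)
  have lower_lim: "(lower \<longlongrightarrow> 1 - \<alpha>) at_top"
    unfolding lower_def x_def using \<alpha> r by real_asymp
  show "((\<lambda>k. eig_min (M k)) \<longlongrightarrow> 1 - \<alpha>) at_top"
    using B by (intro tendsto_sandwich[OF _ _ lower_lim tendsto_const]) (auto elim: eventually_mono)
  have bound_lim: "(bound \<longlongrightarrow> 0) at_top"
    unfolding bound_def x_def using \<alpha> r by real_asymp
  show "((\<lambda>k. eig_weight (M k)) \<longlongrightarrow> 0) at_top"
    using B by (intro tendsto_sandwich[OF _ _ tendsto_const bound_lim]) (auto elim: eventually_mono)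
  have bound_ln_lim: "((\<lambda>k. bound k * ln (2 * x k + 1)) \<longlongrightarrow> 0) at_top"
    unfolding bound_def x_def using \<alpha> r by real_asymp
  have "\<forall>\<^sub>F k in at_top. 0 \<le> eig_weight (M k) * ln (eig_max (M k)) \<and>
      eig_weight (M k) * ln (eig_max (M k)) \<le> bound k * ln (2 * x k + 1)"
    using B by eventually_elim (auto intro!: mult_mono)
  then show "((\<lambda>k. eig_weight (M k) * ln (eig_max (M k))) \<longlongrightarrow> 0) at_top"
    by (intro tendsto_sandwich[OF _ _ tendsto_const bound_ln_lim]) (auto elim: eventually_mono)
qed

lemma eventually_limit_power_mean:
  fixes \<alpha> r s :: real
  assumes \<alpha>: "0 < \<alpha>" "\<alpha> < 1" and r: "0 < r" and s: "0 < s"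
  defines "M \<equiv> limit_power_mean \<alpha> r"
  shows "\<forall>\<^sub>F k in at_top. 0 < k \<and> pos_def (M k) \<and> eig_min (M k) < eig_max (M k) \<and>
    mlog (M k) $ 2 $ 2 < 0 \<and> det (M k) powr s < mpow (M k) s $ 1 $ 1"
proof -
  define m1 m2 w where "m1 k = eig_max (M k)" and "m2 k = eig_min (M k)" and "w k = eig_weight (M k)"
    for k
  note lim = limit_power_mean_asymptotics[OF \<alpha> r, folded M_def m1_def m2_def w_def]
  have "((\<lambda>k. ln (m2 k) * (1 - w k) + w k * ln (m1 k)) \<longlongrightarrow> ln (1 - \<alpha>) * (1 - 0) + 0) at_top"
    by (intro tendsto_intros lim(2-4)) (use \<alpha> in simp)
  then have log_neg: "\<forall>\<^sub>F k in at_top. ln (m2 k) * (1 - w k) + w k * ln (m1 k) < 0"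
    by (rule order_tendstoD) (use \<alpha> in simp)
  have "((\<lambda>k. 1 - w k - m2 k powr s) \<longlongrightarrow> 1 - 0 - (1 - \<alpha>) powr s) at_top"
    by (intro tendsto_intros lim(2-3)) (use \<alpha> in simp)
  moreover have "0 < 1 - 0 - (1 - \<alpha>) powr s"
    using powr_less_mono2[of s "1 - \<alpha>" 1] \<alpha> s by simp
  ultimately have pow_pos: "\<forall>\<^sub>F k in at_top. 0 < 1 - w k - m2 k powr s"
    by (rule order_tendstoD)
  from eventually_gt_at_top[of 0] lim(1) log_neg pow_pos show ?thesis
  proof eventually_elim
    case (elim k)
    then have pd: "pos_def (M k)" and gap: "eig_min (M k) < eig_max (M k)" and "0 \<le> w k"
      by (simp_all add: m1_def m2_def)
    then have sym: "transpose (M k) = M k"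
      by (simp add: pos_def_def)
    have "0 < m2 k" "m2 k < m1 k"
      using eig_min_pos[OF pd] gap by (simp_all add: m1_def m2_def)
    then have "0 < w k * m2 k powr s + m1 k powr s * (1 - w k - m2 k powr s)"
      using elim \<open>0 \<le> w k\<close> by (intro add_nonneg_pos mult_pos_pos) simp_all
    then show ?case
      using elim mlog_nth_2_2[OF sym gap] mpow_nth_1_1_minus_det_powr[OF _ gap, of s]
      by (simp add: m1_def m2_def w_def)
  qed
qed

section \<open>The counterexample\<close>

locale sg_counterexample =
  fixes \<alpha> p q k :: real
  assumes \<alpha>: "0 < \<alpha>" "\<alpha> < 1" and p: "0 < p" and q: "0 < q" and k: "0 < k"
begin

definition c :: "real \<Rightarrow> real" where "c t = k * t powr (1 - \<alpha>)"
definition s :: "real \<Rightarrow> real" where "s t = sqrt (1 - (c t)^2)"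

text \<open>\<open>W\<close> is chosen so that \<open>diag (t\<^bsup>1 - \<alpha>\<^esup>, 1) W = rot (c t) (s t) diag (1, t)\<close>.\<close>
definition W :: "real \<Rightarrow> real^2^2" where "W t = mat2 k (- (t powr \<alpha> * s t)) (s t) (t * c t)"
definition b :: "real \<Rightarrow> real^2^2" where "b t = W t ** transpose (W t)"
definition a :: "real \<Rightarrow> real^2^2" where "a t = mat2 t 0 0 1 ** b t ** mat2 t 0 0 1"

definition A :: "real \<Rightarrow> real^2^2" where "A t = mpow (a t) (1/p)"
definition B :: "real \<Rightarrow> real^2^2" where "B t = mpow (b t) (1/p)"

definition M :: "real \<Rightarrow> real^2^2" where
  "M t = (1 - \<alpha>) *\<^sub>R mpow (a t) (q/p) + \<alpha> *\<^sub>R mpow (b t) (q/p)"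

context
  fixes t :: real
  assumes t: "0 < t" "c t < 1"
begin

lemma c_sq_add_s_sq: "(c t)^2 + (s t)^2 = 1"
proof -
  have "0 \<le> c t"
    using k t by (simp add: c_def)
  then have "(c t)^2 \<le> 1"
    using t by (simp add: power_le_one)
  then show ?thesis
    by (simp add: s_def)
qed

lemma orth_diag_eq_congruence_b:
  defines "D \<equiv> mat2 (t powr (1 - \<alpha>)) 0 0 1"
  shows "orth_diag (rot (c t) (s t)) (vector [1, t^2]) = D ** b t ** D"
proof -
  have "t powr (1 - \<alpha>) * t powr \<alpha> = t"
    using t by (simp add: powr_add[symmetric])
  then have DW: "D ** W t = rot (c t) (s t) ** mat2 1 0 0 t"
    by (simp add: D_def W_def rot_def c_def mat2_eq_iff mult_ac)
  have "orth_diag (rot (c t) (s t)) (vector [1, t^2]) =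
      (rot (c t) (s t) ** mat2 1 0 0 t) ** transpose (rot (c t) (s t) ** mat2 1 0 0 t)"
    by (simp add: orth_diag_def mat2_eq_iff power2_eq_square)
  also have "\<dots> = D ** b t ** D"
    unfolding DW[symmetric] by (simp add: b_def D_def matrix_transpose_mul matrix_mul_assoc)
  finally show ?thesis .
qed

lemma pos_def_b: "pos_def (b t)"
proof -
  define D Di where "D = mat2 (t powr (1 - \<alpha>)) 0 0 1" and "Di = mat2 (t powr (\<alpha> - 1)) 0 0 1"
  have "Di ** D = mat 1" "D ** Di = mat 1"
    using t by (simp_all add: D_def Di_def mat2_eq_iff powr_add[symmetric])
  moreover have "transpose Di ** (D ** b t ** D) ** Di = (Di ** D) ** b t ** (D ** Di)"
    by (simp add: Di_def matrix_mul_assoc)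
  ultimately have "b t = transpose Di ** orth_diag (rot (c t) (s t)) (vector [1, t^2]) ** Di"
    by (simp add: orth_diag_eq_congruence_b D_def)
  moreover have "pos_def (orth_diag (rot (c t) (s t)) (vector [1, t^2]))"
    using t by (simp add: pos_def_orth_diag_iff orthogonal_rot c_sq_add_s_sq forall_2)
  moreover have "invertible Di"
    using t by (simp add: Di_def invertible_mat2_diag)
  ultimately show ?thesis
    by (simp add: pos_def_congruence)
qed

lemma pos_def_a: "pos_def (a t)"
  using pos_def_congruence[OF pos_def_b, of "mat2 t 0 0 1"] t
  by (simp add: a_def invertible_mat2_diag)

lemma b_eq_congruence_a: "b t = mat2 (1/t) 0 0 1 ** a t ** mat2 (1/t) 0 0 1"
proof -
  have "mat2 (1/t) 0 0 1 ** mat2 t 0 0 1 = mat 1"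
    using t by (simp add: mat2_eq_iff)
  moreover have "mat2 (1/t) 0 0 1 ** a t ** mat2 (1/t) 0 0 1 =
      (mat2 (1/t) 0 0 1 ** mat2 t 0 0 1) ** b t ** (mat2 (1/t) 0 0 1 ** mat2 t 0 0 1)"
    by (simp add: a_def matrix_mul_assoc mat2_eq_iff)
  ultimately show ?thesis
    by simp
qed

lemma gmean_a_b: "gmean (matrix_inv (a t)) (b t) = mat2 (1/t) 0 0 1"
  using gmean_eqI[OF pos_def_2_matrix_inv(1)[OF pos_def_a] pos_def_mat2_diag] t
  by (simp add: pos_def_2_matrix_inv(2)[OF pos_def_a] b_eq_congruence_a)

lemma Fsg_a_b: "Fsg \<alpha> (a t) (b t) = orth_diag (rot (c t) (s t)) (vector [1, t^2])"
proof -
  define G D where "G = mpow (mat2 (1/t) 0 0 1) \<alpha>" and "D = mat2 (t powr (1 - \<alpha>)) 0 0 1"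
  have "G ** mat2 t 0 0 1 = D" "mat2 t 0 0 1 ** G = D"
    using t by (simp_all add: G_def D_def mpow_mat2_diag mat2_eq_iff powr_diff powr_divide)
  moreover have "Fsg \<alpha> (a t) (b t) = (G ** mat2 t 0 0 1) ** b t ** (mat2 t 0 0 1 ** G)"
    unfolding Fsg_def gmean_a_b by (simp add: G_def a_def matrix_mul_assoc)
  ultimately show ?thesis
    by (simp add: orth_diag_eq_congruence_b D_def)
qed

lemma pos_def_A_B: "pos_def (A t)" "pos_def (B t)"
  unfolding A_def B_def mpow_def by (simp_all add: pos_def_mfun pos_def_a pos_def_b)

lemma mpow_A_B: "mpow (A t) r = mpow (a t) (r/p)" "mpow (B t) r = mpow (b t) (r/p)"
  by (simp_all add: A_def B_def mpow_mpow[OF pos_def_a] mpow_mpow[OF pos_def_b])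

lemma SG_A_B: "SG \<alpha> p (A t) (B t) = orth_diag (rot (c t) (s t)) (vector [1, t powr (2/p)])"
proof -
  have "mpow (A t) p = a t" "mpow (B t) p = b t"
    using p by (simp_all add: mpow_A_B mpow_1 pos_def_a pos_def_b)
  moreover have "(\<chi> i. (vector [1, t^2] :: real^2) $ i powr (1/p)) = vector [1, t powr (2/p)]"
    using powr_powr[of t 2 "1/p"] t by (simp add: vec2_eq_iff)
  ultimately show ?thesis
    by (simp add: SG_def Fsg_a_b mpow_orth_diag orthogonal_rot c_sq_add_s_sq)
qed

lemma Amean_A_B: "Amean \<alpha> q (A t) (B t) = mpow (M t) (1/q)"
  by (simp add: Amean_def M_def mpow_A_B)

lemma inner_mlog_SG_eigenvector:
  "vector [c t, s t] \<bullet> (mlog (SG \<alpha> p (A t) (B t)) *v vector [c t, s t]) = 0"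
proof -
  have "(\<chi> i. ln ((vector [1, t powr (2/p)] :: real^2) $ i)) = vector [0, ln (t powr (2/p))]"
    by (simp add: vec2_eq_iff)
  then have "mlog (SG \<alpha> p (A t) (B t)) = orth_diag (rot (c t) (s t)) (vector [0, ln (t powr (2/p))])"
    by (simp only: SG_A_B mlog_orth_diag[OF orthogonal_rot[OF c_sq_add_s_sq]])
  then show ?thesis
    by (simp add: orth_diag_rot inner_2 algebra_simps)
qed

lemma pos_def_M: "pos_def (M t)"
  unfolding M_def mpow_def using \<alpha>
  by (intro pos_def_scaleR_add pos_def_mfun pos_def_a pos_def_b) simp_all

end

lemma c_tendsto: "(c \<longlongrightarrow> 0) (at_right 0)"
  unfolding c_def using \<alpha> by real_asymp

lemma s_tendsto: "(s \<longlongrightarrow> 1) (at_right 0)"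
proof -
  have "(s \<longlongrightarrow> sqrt (1 - 0^2)) (at_right 0)"
    unfolding s_def[abs_def] by (intro tendsto_intros c_tendsto)
  then show ?thesis
    by simp
qed

lemma eventually_admissible: "\<forall>\<^sub>F t in at_right 0. 0 < t \<and> c t < 1"
proof -
  have "\<forall>\<^sub>F t in at_right 0. c t < 1"
    by (rule order_tendstoD(2)[OF c_tendsto]) simp
  then show ?thesis
    using eventually_at_right_less[of 0] by eventually_elim simp
qed

lemma b_tendsto: "(b \<longlongrightarrow> mat2 (k^2) k k 1) (at_right 0)"
proof -
  have "((\<lambda>t. t powr \<alpha>) \<longlongrightarrow> 0) (at_right 0)"
    using \<alpha> by real_asymp
  then have "(W \<longlongrightarrow> mat2 k (- (0 * 1)) 1 (0 * 0)) (at_right 0)"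
    unfolding W_def[abs_def] by (intro tendsto_mat2 tendsto_intros c_tendsto s_tendsto)
  then have "(b \<longlongrightarrow> mat2 k 0 1 0 ** transpose (mat2 k 0 1 0)) (at_right 0)"
    unfolding b_def[abs_def] by (intro tendsto_intros) simp_all
  moreover have "mat2 k 0 1 0 ** transpose (mat2 k 0 1 0) = mat2 (k^2) k k 1"
    by (simp add: mat2_eq_iff power2_eq_square)
  ultimately show ?thesis
    by simp
qed

lemma a_tendsto: "(a \<longlongrightarrow> mat2 0 0 0 1) (at_right 0)"
proof -
  have "((\<lambda>t. mat2 t 0 0 1) \<longlongrightarrow> mat2 0 0 0 1) (at_right 0)"
    by (intro tendsto_mat2 tendsto_intros)
  then have "(a \<longlongrightarrow> mat2 0 0 0 1 ** mat2 (k^2) k k 1 ** mat2 0 0 0 1) (at_right 0)"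
    unfolding a_def[abs_def] by (intro tendsto_intros b_tendsto)
  moreover have "mat2 0 0 0 1 ** mat2 (k^2) k k 1 ** mat2 0 0 0 1 = mat2 0 0 0 1"
    by (simp add: mat2_eq_iff)
  ultimately show ?thesis
    by simp
qed

lemma M_tendsto: "(M \<longlongrightarrow> limit_power_mean \<alpha> (q/p) k) (at_right 0)"
proof -
  define r where "r = q / p"
  have r: "0 < r"
    using p q by (simp add: r_def)
  have pd: "\<forall>\<^sub>F t in at_right 0. pos_def (a t) \<and> pos_def (b t)"
    using eventually_admissible by (auto elim: eventually_mono intro: pos_def_a pos_def_b)
  have eig_a: "eig_max (mat2 0 0 0 1) = 1" "eig_min (mat2 0 0 0 1) = 0"
    by (simp_all add: eig_max_def eig_min_def eig_disc_def)
  have "eig_disc (mat2 (k^2) k k 1) = (1 + k^2)^2"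
    by (simp add: eig_disc_def power2_eq_square algebra_simps)
  then have eig_b: "eig_max (mat2 (k^2) k k 1) = 1 + k^2" "eig_min (mat2 (k^2) k k 1) = 0"
    by (simp_all add: eig_max_def eig_min_def add_nonneg_nonneg)
  have "((\<lambda>t. mpow (a t) r) \<longlongrightarrow> mpow (mat2 0 0 0 1) r) (at_right 0)"
    using pd r by (intro tendsto_mpow a_tendsto) (auto simp: eig_a mat2_eq_iff elim: eventually_mono)
  moreover have "mpow (mat2 0 0 0 1) r = mat2 0 0 0 1"
    using r by (simp add: mpow_mat2_diag)
  moreover have "((\<lambda>t. mpow (b t) r) \<longlongrightarrow> mpow (mat2 (k^2) k k 1) r) (at_right 0)"
    using pd r
    by (intro tendsto_mpow b_tendsto) (auto simp: eig_b mat2_eq_iff add_pos_nonneg elim: eventually_mono)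
  moreover have "mpow (mat2 (k^2) k k 1) r = (1 + k^2) powr (r - 1) *\<^sub>R mat2 (k^2) k k 1"
  proof -
    have "0 < 1 + k^2"
      by (simp add: add_pos_nonneg)
    then show ?thesis
      using r by (simp add: mpow_def mfun_eq_interp mfun_interp_def eig_b mat2_eq_iff powr_diff)
  qed
  ultimately have "(M \<longlongrightarrow> (1 - \<alpha>) *\<^sub>R mat2 0 0 0 1 + \<alpha> *\<^sub>R ((1 + k^2) powr (r - 1) *\<^sub>R mat2 (k^2) k k 1))
      (at_right 0)"
    unfolding M_def[abs_def] r_def[symmetric] by (intro tendsto_intros) simp_all
  then show ?thesis
    by (simp add: limit_power_mean_def r_def)
qed

lemma eventually_not_chao_le:
  defines "M0 \<equiv> limit_power_mean \<alpha> (q/p) k"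
  assumes pd0: "pos_def M0" and gap0: "eig_min M0 < eig_max M0" and neg: "mlog M0 $ 2 $ 2 < 0"
  shows "\<forall>\<^sub>F t in at_right 0. \<not> chao_le (SG \<alpha> p (A t) (B t)) (Amean \<alpha> q (A t) (B t))"
proof -
  define v where "v t = (vector [c t, s t] :: real^2)" for t
  have "((\<lambda>t. v t \<bullet> ((1/q) *\<^sub>R mlog (M t) *v v t)) \<longlongrightarrow>
      vector [0, 1] \<bullet> ((1/q) *\<^sub>R mlog M0 *v vector [0, 1])) (at_right 0)"
    unfolding v_def M0_def using eventually_admissible pd0 gap0
    by (intro tendsto_intros tendsto_vector_2 c_tendsto s_tendsto tendsto_mlog M_tendsto)
      (auto simp: M0_def intro: pos_def_M elim: eventually_mono)
  moreover have "vector [0, 1] \<bullet> ((1/q) *\<^sub>R mlog M0 *v vector [0, 1]) < 0"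
    using neg q by (simp add: inner_2 divide_neg_pos)
  ultimately have "\<forall>\<^sub>F t in at_right 0. v t \<bullet> ((1/q) *\<^sub>R mlog (M t) *v v t) < 0"
    by (rule order_tendstoD)
  with eventually_admissible show ?thesis
  proof eventually_elim
    case (elim t)
    then have "v t \<bullet> (mlog (Amean \<alpha> q (A t) (B t)) *v v t) <
        v t \<bullet> (mlog (SG \<alpha> p (A t) (B t)) *v v t)"
      by (simp add: v_def inner_mlog_SG_eigenvector Amean_A_B mlog_mpow pos_def_M)
    then show ?case
      unfolding chao_le_def loewner_le_iff by (meson not_le)
  qed
qed

lemma SG_tendsto: "((\<lambda>t. SG \<alpha> p (A t) (B t)) \<longlongrightarrow> mat2 0 0 0 1) (at_right 0)"
proof -
  define R where "R t = orth_diag (rot (c t) (s t)) (vector [1, t powr (2/p)])" for t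
  have "((\<lambda>t. t powr (2/p)) \<longlongrightarrow> 0) (at_right 0)"
    using p by real_asymp
  then have "(R \<longlongrightarrow> mat2 0 (- 1) 1 0 ** mat2 1 0 0 0 ** transpose (mat2 0 (- 1) 1 0)) (at_right 0)"
    unfolding R_def[abs_def] orth_diag_def rot_def mdiag_vector_2
    by (intro tendsto_intros tendsto_mat2 c_tendsto s_tendsto)
  moreover have "mat2 0 (- 1) 1 0 ** mat2 1 0 0 0 ** transpose (mat2 0 (- 1) 1 0) = mat2 0 0 0 1"
    by (simp add: mat2_eq_iff)
  moreover have "\<forall>\<^sub>F t in at_right 0. R t = SG \<alpha> p (A t) (B t)"
    using eventually_admissible by eventually_elim (simp add: R_def SG_A_B)
  ultimately show ?thesis
    by (auto intro: Lim_transform_eventually)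
qed

lemma eventually_not_loewner_le:
  defines "M0 \<equiv> limit_power_mean \<alpha> (q/p) k"
  assumes pd0: "pos_def M0" and gap0: "eig_min M0 < eig_max M0"
    and det_less: "det M0 powr (1/q) < mpow M0 (1/q) $ 1 $ 1"
  shows "\<forall>\<^sub>F t in at_right 0. \<not> loewner_le (SG \<alpha> p (A t) (B t)) (Amean \<alpha> q (A t) (B t))"
proof -
  have sym0: "transpose M0 = M0"
    using pd0 by (simp add: pos_def_def)
  define X0 where "X0 = mpow M0 (1/q)"
  define u where "u = (vector [- X0 $ 1 $ 2, X0 $ 1 $ 1] :: real^2)"
  have "\<forall>\<^sub>F t in at_right 0. mpow (M t) (1/q) = Amean \<alpha> q (A t) (B t)"
    using eventually_admissible by eventually_elim (simp add: Amean_A_B)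
  moreover have "((\<lambda>t. mpow (M t) (1/q)) \<longlongrightarrow> X0) (at_right 0)"
    unfolding X0_def M0_def using eventually_admissible sym0 gap0 q eig_min_pos[OF pd0]
    by (intro tendsto_mpow M_tendsto)
      (auto simp: M0_def intro: pos_def_M elim: eventually_mono)
  ultimately have "((\<lambda>t. Amean \<alpha> q (A t) (B t)) \<longlongrightarrow> X0) (at_right 0)"
    by (rule Lim_transform_eventually[rotated])
  then have "((\<lambda>t. u \<bullet> ((Amean \<alpha> q (A t) (B t) - SG \<alpha> p (A t) (B t)) *v u)) \<longlongrightarrow>
      u \<bullet> ((X0 - mat2 0 0 0 1) *v u)) (at_right 0)"
    by (intro tendsto_intros SG_tendsto)
  moreover have "u \<bullet> ((X0 - mat2 0 0 0 1) *v u) < 0"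
  proof -
    have "pos_def X0"
      unfolding X0_def mpow_def by (rule pos_def_mfun[OF pd0]) simp
    then have "0 < X0 $ 1 $ 1"
      using eig_min_pos eig_min_le_diag[of X0 1] by fastforce
    moreover have "det X0 < X0 $ 1 $ 1"
      using det_less by (simp add: X0_def det_mpow[OF pd0])
    ultimately show ?thesis
      using corner_quadratic_form[of X0] \<open>pos_def X0\<close> by (simp add: u_def pos_def_def mult_pos_neg)
  qed
  ultimately have
    "\<forall>\<^sub>F t in at_right 0. u \<bullet> ((Amean \<alpha> q (A t) (B t) - SG \<alpha> p (A t) (B t)) *v u) < 0"
    by (rule order_tendstoD)
  then show ?thesis
    unfolding loewner_le_def by (auto elim: eventually_mono simp: not_le)
qed

end

theorem theorem4p23:
  fixes \<alpha> p q :: real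
  assumes "0 < \<alpha>" "\<alpha> < 1" "0 < p" "0 < q"
  shows "\<exists>A B :: real^2^2. pos_def A \<and> pos_def B \<and>
           \<not> chao_le (SG \<alpha> p A B) (Amean \<alpha> q A B) \<and>
           \<not> loewner_le (SG \<alpha> p A B) (Amean \<alpha> q A B)"
proof -
  let ?M = "limit_power_mean \<alpha> (q/p)"
  have "\<forall>\<^sub>F k in at_top. 0 < k \<and> pos_def (?M k) \<and> eig_min (?M k) < eig_max (?M k) \<and>
      mlog (?M k) $ 2 $ 2 < 0 \<and> det (?M k) powr (1/q) < mpow (?M k) (1/q) $ 1 $ 1"
    using eventually_limit_power_mean[of \<alpha> "q/p" "1/q"] assms by simp
  from eventually_happens[OF this] obtain k where k_good: "0 < k" "pos_def (?M k)"
    "eig_min (?M k) < eig_max (?M k)" "mlog (?M k) $ 2 $ 2 < 0"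
    "det (?M k) powr (1/q) < mpow (?M k) (1/q) $ 1 $ 1"
    by auto
  interpret sg_counterexample \<alpha> p q k
    using assms k_good(1) by unfold_locales
  have "\<forall>\<^sub>F t in at_right 0. pos_def (A t) \<and> pos_def (B t) \<and>
      \<not> chao_le (SG \<alpha> p (A t) (B t)) (Amean \<alpha> q (A t) (B t)) \<and>
      \<not> loewner_le (SG \<alpha> p (A t) (B t)) (Amean \<alpha> q (A t) (B t))"
    using eventually_admissible eventually_not_chao_le[OF k_good(2-4)]
      eventually_not_loewner_le[OF k_good(2,3,5)]
    by eventually_elim (simp add: pos_def_A_B)
  from eventually_happens[OF this] show ?thesis
    by auto
qed

end
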